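(* Let $\mathcal X,\mathcal U$ be finite nonempty sets, $f:\mathcal X\times\mathcal U\to\mathcal X$ and $\ell,g:\mathcal X\to\mathbb R$. Let $V_{\mathrm A}^*(x)=\max_{\pi\in\Pi}\min_{\tau\in\mathbb N}g(\xi_x^\pi(\tau))$, $\tilde\ell(x)=\min\{\ell(x),V_{\mathrm A}^*(x)\}$, and $$\tilde v_{\mathrm{RA}}^*(x)=\max_{\mathbf u\in\mathbb U}\max_{\tau\in\mathbb N}\min\Big\{\tilde\ell(\xi_x^{\mathbf u}(\tau)),\min_{\kappa\le\tau}g(\xi_x^{\mathbf u}(\kappa))\Big\}.$$ Then there is a policy $\pi\in\Pi$ such that for all $x\in\mathcal X$, $$\tilde v_{\mathrm{RA}}^*(x)=\max_{\tau\in\mathbb N}\min\Big\{\tilde\ell(\xi_x^\pi(\tau)),\min_{\kappa\le\tau}g(\xi_x^\pi(\kappa))\Big\}.$$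
   Context: $\mathbb N=\{0,1,\dots\}$; $\Pi$ is the set of maps $\mathcal X\to\mathcal U$; $\mathbb U$ is the set of sequences $\mathbb N\to\mathcal U$. For $\pi\in\Pi$: $\xi_x^\pi(0)=x$, $\xi_x^\pi(t+1)=f(\xi_x^\pi(t),\pi(\xi_x^\pi(t)))$. For $\mathbf u\in\mathbb U$: $\xi_x^{\mathbf u}(0)=x$, $\xi_x^{\mathbf u}(t+1)=f(\xi_x^{\mathbf u}(t),\mathbf u(t))$. *)

theory Defs
  imports Complex_Main
begin

text \<open>Finite nonempty state space 'x and input space 'u are modelled by types of
class finite (types are always nonempty). Policies are maps 'x => 'u,
input sequences are maps nat => 'u.\<close>

primrec traj_pol :: "('x \<Rightarrow> 'u \<Rightarrow> 'x) \<Rightarrow> ('x \<Rightarrow> 'u) \<Rightarrow> 'x \<Rightarrow> nat \<Rightarrow> 'x" where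
  "traj_pol f \<pi> x 0 = x"
| "traj_pol f \<pi> x (Suc t) = f (traj_pol f \<pi> x t) (\<pi> (traj_pol f \<pi> x t))"

primrec traj_seq :: "('x \<Rightarrow> 'u \<Rightarrow> 'x) \<Rightarrow> (nat \<Rightarrow> 'u) \<Rightarrow> 'x \<Rightarrow> nat \<Rightarrow> 'x" where
  "traj_seq f u x 0 = x"
| "traj_seq f u x (Suc t) = f (traj_seq f u x t) (u t)"

definition VA :: "('x::finite \<Rightarrow> 'u::finite \<Rightarrow> 'x) \<Rightarrow> ('x \<Rightarrow> real) \<Rightarrow> 'x \<Rightarrow> real" where
  "VA f g x = Max ((\<lambda>\<pi>. Min (range (\<lambda>\<tau>. g (traj_pol f \<pi> x \<tau>)))) ` UNIV)"

definition ltil :: "('x::finite \<Rightarrow> 'u::finite \<Rightarrow> 'x) \<Rightarrow> ('x \<Rightarrow> real) \<Rightarrow> ('x \<Rightarrow> real) \<Rightarrow> 'x \<Rightarrow> real" where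
  "ltil f l g x = min (l x) (VA f g x)"

definition RA_payoff :: "('x \<Rightarrow> real) \<Rightarrow> ('x \<Rightarrow> real) \<Rightarrow> (nat \<Rightarrow> 'x) \<Rightarrow> real" where
  "RA_payoff lt g \<xi> = Max (range (\<lambda>\<tau>. min (lt (\<xi> \<tau>)) (Min ((\<lambda>\<kappa>. g (\<xi> \<kappa>)) ` {..\<tau>}))))"

definition vRA :: "('x::finite \<Rightarrow> 'u::finite \<Rightarrow> 'x) \<Rightarrow> ('x \<Rightarrow> real) \<Rightarrow> ('x \<Rightarrow> real) \<Rightarrow> 'x \<Rightarrow> real" where
  "vRA f l g x = Max ((\<lambda>u. RA_payoff (ltil f l g) g (traj_seq f u x)) ` UNIV)"

end

theory Submission
  imports Defs
begin

text \<open>The argument works for an arbitrary target function h in place of the modified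
target ltil. For every state x pick an input sequence u and a stopping time k attaining
the open-loop value V x, with k as small as possible, and let the policy play the first
input of u. If k > 0, then g x \<ge> V x and the successor y = f x (u 0) satisfies V y \<ge> V x,
with a strictly smaller minimal stopping time when V y = V x. As V takes finitely many
values, induction on the number of states whose value exceeds V x, and then on k, shows
that the closed-loop trajectory attains V x; the converse inequality holds because a
policy induces a particular input sequence.\<close>

definition stop_payoff :: "('x \<Rightarrow> real) \<Rightarrow> ('x \<Rightarrow> real) \<Rightarrow> (nat \<Rightarrow> 'x) \<Rightarrow> nat \<Rightarrow> real" where
  "stop_payoff h g \<xi> \<tau> = min (h (\<xi> \<tau>)) (Min ((\<lambda>\<kappa>. g (\<xi> \<kappa>)) ` {..\<tau>}))"

lemma RA_payoff_eq_Max_stop_payoff: "RA_payoff h g \<xi> = Max (range (stop_payoff h g \<xi>))"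
  unfolding RA_payoff_def stop_payoff_def by simp

lemma stop_payoff_in_range: "stop_payoff h g \<xi> \<tau> \<in> range h \<union> range g"
proof -
  have "Min ((\<lambda>\<kappa>. g (\<xi> \<kappa>)) ` {..\<tau>}) \<in> (\<lambda>\<kappa>. g (\<xi> \<kappa>)) ` {..\<tau>}"
    by (rule Min_in) auto
  then have "Min ((\<lambda>\<kappa>. g (\<xi> \<kappa>)) ` {..\<tau>}) \<in> range g"
    by blast
  then show ?thesis
    unfolding stop_payoff_def by (auto simp: min_def)
qed

lemma finite_range_stop_payoff: "finite (range (stop_payoff h g (\<xi> :: nat \<Rightarrow> 'x::finite)))"
  by (rule finite_subset[of _ "range h \<union> range g"]) (use stop_payoff_in_range in blast, simp)

lemma stop_payoff_le_RA_payoff: "stop_payoff h g (\<xi> :: nat \<Rightarrow> 'x::finite) \<tau> \<le> RA_payoff h g \<xi>"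
  unfolding RA_payoff_eq_Max_stop_payoff by (rule Max_ge[OF finite_range_stop_payoff]) auto

lemma RA_payoff_attained: "\<exists>\<tau>. RA_payoff h g (\<xi> :: nat \<Rightarrow> 'x::finite) = stop_payoff h g \<xi> \<tau>"
proof -
  have "Max (range (stop_payoff h g \<xi>)) \<in> range (stop_payoff h g \<xi>)"
    by (rule Max_in[OF finite_range_stop_payoff]) auto
  then show ?thesis
    unfolding RA_payoff_eq_Max_stop_payoff by auto
qed

lemma RA_payoff_in_range: "RA_payoff h g (\<xi> :: nat \<Rightarrow> 'x::finite) \<in> range h \<union> range g"
  using RA_payoff_attained stop_payoff_in_range by metis

lemma stop_payoff_Suc:
  "stop_payoff h g \<xi> (Suc \<tau>) = min (g (\<xi> 0)) (stop_payoff h g (\<lambda>t. \<xi> (Suc t)) \<tau>)"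
proof -
  have "(\<lambda>\<kappa>. g (\<xi> \<kappa>)) ` {..Suc \<tau>} = insert (g (\<xi> 0)) ((\<lambda>\<kappa>. g (\<xi> (Suc \<kappa>))) ` {..\<tau>})"
    by (simp add: atMost_Suc_eq_insert_0 image_image)
  then show ?thesis
    unfolding stop_payoff_def by (simp add: min.left_commute)
qed

lemma traj_seq_Suc_shift: "traj_seq f u x (Suc t) = traj_seq f (\<lambda>t. u (Suc t)) (f x (u 0)) t"
  by (induction t) auto

lemma traj_pol_Suc_shift: "traj_pol f \<pi> x (Suc t) = traj_pol f \<pi> (f x (\<pi> x)) t"
  by (induction t) auto

lemma traj_pol_eq_traj_seq: "traj_pol f \<pi> x = traj_seq f (\<lambda>t. \<pi> (traj_pol f \<pi> x t)) x"
proof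
  show "traj_pol f \<pi> x t = traj_seq f (\<lambda>t. \<pi> (traj_pol f \<pi> x t)) x t" for t
    by (induction t) auto
qed

definition open_loop_value ::
    "('x::finite \<Rightarrow> 'u::finite \<Rightarrow> 'x) \<Rightarrow> ('x \<Rightarrow> real) \<Rightarrow> ('x \<Rightarrow> real) \<Rightarrow> 'x \<Rightarrow> real" where
  "open_loop_value f h g x = Max ((\<lambda>u. RA_payoff h g (traj_seq f u x)) ` UNIV)"

lemma vRA_eq_open_loop_value: "vRA f l g = open_loop_value f (ltil f l g) g"
  unfolding vRA_def open_loop_value_def by (rule ext) simp

lemma finite_open_loop_payoffs:
  "finite ((\<lambda>u. RA_payoff h g (traj_seq f u (x::'x::finite))) ` UNIV)"
  by (rule finite_subset[of _ "range h \<union> range g"]) (use RA_payoff_in_range in blast, simp)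

lemma RA_payoff_le_open_loop_value: "RA_payoff h g (traj_seq f u x) \<le> open_loop_value f h g x"
  unfolding open_loop_value_def by (rule Max_ge[OF finite_open_loop_payoffs]) auto

lemma open_loop_value_attained: "\<exists>u \<tau>. open_loop_value f h g x = stop_payoff h g (traj_seq f u x) \<tau>"
proof -
  have "open_loop_value f h g x \<in> (\<lambda>u. RA_payoff h g (traj_seq f u x)) ` UNIV"
    unfolding open_loop_value_def by (rule Max_in[OF finite_open_loop_payoffs]) auto
  then show ?thesis
    using RA_payoff_attained by fastforce
qed

lemma policy_payoff_le_open_loop_value:
  "RA_payoff h g (traj_pol f \<pi> x) \<le> open_loop_value f h g x"
  by (subst traj_pol_eq_traj_seq) (rule RA_payoff_le_open_loop_value)

context
  fixes f :: "'x::finite \<Rightarrow> 'u::finite \<Rightarrow> 'x" and h g :: "'x \<Rightarrow> real"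
begin

definition optimal_stop_time :: "'x \<Rightarrow> nat" where
  "optimal_stop_time x =
    (LEAST k. \<exists>u. open_loop_value f h g x \<le> stop_payoff h g (traj_seq f u x) k)"

definition optimal_input :: "'x \<Rightarrow> nat \<Rightarrow> 'u" where
  "optimal_input x = (SOME u.
    open_loop_value f h g x \<le> stop_payoff h g (traj_seq f u x) (optimal_stop_time x))"

definition greedy_policy :: "'x \<Rightarrow> 'u" where
  "greedy_policy x = optimal_input x 0"

lemma optimal_input_attains:
  "open_loop_value f h g x \<le> stop_payoff h g (traj_seq f (optimal_input x) x) (optimal_stop_time x)"
proof -
  obtain u \<tau> where "open_loop_value f h g x = stop_payoff h g (traj_seq f u x) \<tau>"
    using open_loop_value_attained by blast
  then have "\<exists>k u. open_loop_value f h g x \<le> stop_payoff h g (traj_seq f u x) k"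
    by (metis order_refl)
  then have "\<exists>u. open_loop_value f h g x \<le> stop_payoff h g (traj_seq f u x) (optimal_stop_time x)"
    unfolding optimal_stop_time_def by (rule LeastI_ex)
  then show ?thesis
    unfolding optimal_input_def by (rule someI_ex)
qed

lemma greedy_step:
  assumes "optimal_stop_time x = Suc k"
  defines "y \<equiv> f x (greedy_policy x)"
  shows "open_loop_value f h g x \<le> g x"
    and "open_loop_value f h g x \<le> open_loop_value f h g y"
    and "open_loop_value f h g y = open_loop_value f h g x \<Longrightarrow> optimal_stop_time y < optimal_stop_time x"
proof -
  let ?u = "\<lambda>t. optimal_input x (Suc t)"
  have "open_loop_value f h g x \<le> stop_payoff h g (traj_seq f (optimal_input x) x) (Suc k)"
    using optimal_input_attains[of x] assms(1) by simp
  then have "open_loop_value f h g x \<le> min (g x) (stop_payoff h g (traj_seq f ?u y) k)"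
    unfolding stop_payoff_Suc traj_seq_Suc_shift y_def greedy_policy_def by simp
  then have g_ge: "open_loop_value f h g x \<le> g x"
    and tail_ge: "open_loop_value f h g x \<le> stop_payoff h g (traj_seq f ?u y) k"
    by simp_all
  show "open_loop_value f h g x \<le> g x"
    by (fact g_ge)
  show "open_loop_value f h g x \<le> open_loop_value f h g y"
    using tail_ge stop_payoff_le_RA_payoff[of h g "traj_seq f ?u y" k]
      RA_payoff_le_open_loop_value[of h g f ?u y]
    by linarith
  assume "open_loop_value f h g y = open_loop_value f h g x"
  then have "optimal_stop_time y \<le> k"
    unfolding optimal_stop_time_def using tail_ge by (metis (mono_tags, lifting) Least_le)
  then show "optimal_stop_time y < optimal_stop_time x"
    using assms by simp
qed

lemma open_loop_value_le_greedy_payoff: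
  "open_loop_value f h g x \<le> RA_payoff h g (traj_pol f greedy_policy x)"
proof -
  let ?V = "open_loop_value f h g"
  define better where "better x = card {z. ?V x < ?V z}" for x
  let ?R = "inv_image (less_than <*lex*> less_than) (\<lambda>x. (better x, optimal_stop_time x))"
  show ?thesis
  proof (induction x rule: wf_induct[of ?R])
    case (2 x)
    show ?case
    proof (cases "optimal_stop_time x")
      case 0
      have "?V x \<le> stop_payoff h g (traj_seq f (optimal_input x) x) 0"
        using optimal_input_attains[of x] 0 by simp
      also have "\<dots> = stop_payoff h g (traj_pol f greedy_policy x) 0"
        unfolding stop_payoff_def by simp
      also have "\<dots> \<le> RA_payoff h g (traj_pol f greedy_policy x)"
        by (rule stop_payoff_le_RA_payoff)
      finally show ?thesis .
    next
      case (Suc k)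
      let ?y = "f x (greedy_policy x)"
      have "(?y, x) \<in> ?R"
      proof (cases "?V ?y = ?V x")
        case True
        then show ?thesis
          using greedy_step(3)[OF Suc] better_def by simp
      next
        case False
        then have "?V x < ?V ?y"
          using greedy_step(2)[OF Suc] by simp
        then have "{z. ?V ?y < ?V z} \<subset> {z. ?V x < ?V z}"
          by auto
        then have "better ?y < better x"
          unfolding better_def by (intro psubset_card_mono) auto
        then show ?thesis
          by simp
      qed
      then have IH: "?V ?y \<le> RA_payoff h g (traj_pol f greedy_policy ?y)"
        using 2 by blast
      obtain \<tau> where \<tau>: "RA_payoff h g (traj_pol f greedy_policy ?y)
          = stop_payoff h g (traj_pol f greedy_policy ?y) \<tau>"
        using RA_payoff_attained by blast
      have "?V x \<le> min (g x) (stop_payoff h g (traj_pol f greedy_policy ?y) \<tau>)"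
        using greedy_step(1,2)[OF Suc] IH \<tau> by simp
      also have "\<dots> = stop_payoff h g (traj_pol f greedy_policy x) (Suc \<tau>)"
        unfolding stop_payoff_Suc traj_pol_Suc_shift by simp
      also have "\<dots> \<le> RA_payoff h g (traj_pol f greedy_policy x)"
        by (rule stop_payoff_le_RA_payoff)
      finally show ?thesis .
    qed
  qed auto
qed

lemma greedy_policy_optimal:
  "open_loop_value f h g x = RA_payoff h g (traj_pol f greedy_policy x)"
  using open_loop_value_le_greedy_payoff policy_payoff_le_open_loop_value by (rule order_antisym)

end

theorem mainTheorem5:
  fixes f :: "'x::finite \<Rightarrow> 'u::finite \<Rightarrow> 'x" and l g :: "'x \<Rightarrow> real"
  shows "\<exists>\<pi> :: 'x \<Rightarrow> 'u. \<forall>x. vRA f l g x = RA_payoff (ltil f l g) g (traj_pol f \<pi> x)"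
  using greedy_policy_optimal[of f "ltil f l g" g] by (auto simp: vRA_eq_open_loop_value)

end
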